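(* Let $L>0$, $g\in L^2(0,L;\mathbb{C})$, $\lambda_0=\int_0^L\overline{g(x)}dx$, $\lambda_k=\frac{2ik\pi}{L}$ for $k\in\mathbb{Z}\setminus\{0\}$, and assume $\lambda_0\ne\lambda_k$ for all $k\ne0$. Define $\phi_0(x)=1$ and, for $k\ne0$, $\phi_k(x)=e^{-\lambda_kx}+\frac{1}{\lambda_k-\lambda_0}\int_0^L\overline{g(s)}e^{-\lambda_ks}ds$ (these are the eigenfunctions of $\tilde A^*$). Then: (1) $\{\phi_k\}_{k\in\mathbb{Z}}$ is a Riesz basis of $L^2(0,L)$; (2) if $1+\frac{1}{\lambda_k-\lambda_0}\int_0^L\overline{g(x)}e^{-\lambda_kx}dx\ne0$ for all $k\ne0$, then $\inf_{k\in\mathbb{Z}}|\tilde B^*\phi_k|>0$; (3) $\{e^{-\overline{\lambda_k}t}\}_{k\in\mathbb{Z}}$ is a Riesz basis of $L^2(0,L)$.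
   Context: $\tilde A^*$ is the operator on $L^2(0,L)$ with domain $\{z\in H^1(0,L):z(L)=z(0)\}$, $\tilde A^*z(x)=-z'(x)+\int_0^L\overline{g(y)}z(y)dy$; $\tilde B^*z=z(L)$. A Riesz basis of a Hilbert space is the image of an orthonormal basis under a bounded invertible linear operator. *)

theory Defs
  imports "HOL-Analysis.Analysis"
begin

text \<open>Concrete model of the Hilbert space L^2(0,L;C): complex-valued functions on the reals,
  considered on [0,L] with Lebesgue measure, modulo equality almost everywhere.\<close>

definition L2 :: "real \<Rightarrow> (real \<Rightarrow> complex) set" where
  "L2 L = {f. f \<in> borel_measurable (lebesgue_on {0..L})
             \<and> integrable (lebesgue_on {0..L}) (\<lambda>x. (cmod (f x))\<^sup>2)}"

definition l2_inner :: "real \<Rightarrow> (real \<Rightarrow> complex) \<Rightarrow> (real \<Rightarrow> complex) \<Rightarrow> complex" where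
  "l2_inner L f g = (LINT x|lebesgue_on {0..L}. f x * cnj (g x))"

definition l2_norm :: "real \<Rightarrow> (real \<Rightarrow> complex) \<Rightarrow> real" where
  "l2_norm L f = sqrt (LINT x|lebesgue_on {0..L}. (cmod (f x))\<^sup>2)"

definition ae_eq :: "real \<Rightarrow> (real \<Rightarrow> complex) \<Rightarrow> (real \<Rightarrow> complex) \<Rightarrow> bool" where
  "ae_eq L f g \<longleftrightarrow> (AE x in lebesgue_on {0..L}. f x = g x)"

definition orthonormal_basis :: "real \<Rightarrow> (int \<Rightarrow> real \<Rightarrow> complex) \<Rightarrow> bool" where
  "orthonormal_basis L e \<longleftrightarrow>
     (\<forall>k. e k \<in> L2 L)
     \<and> (\<forall>j k. l2_inner L (e j) (e k) = (if j = k then 1 else 0))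
     \<and> (\<forall>f\<in>L2 L. \<forall>\<epsilon>>0. \<exists>F c. finite F \<and>
           l2_norm L (\<lambda>x. f x - (\<Sum>k\<in>F. c k * e k x)) < \<epsilon>)"

definition bounded_linear_L2 :: "real \<Rightarrow> ((real \<Rightarrow> complex) \<Rightarrow> (real \<Rightarrow> complex)) \<Rightarrow> bool" where
  "bounded_linear_L2 L T \<longleftrightarrow>
     (\<forall>f\<in>L2 L. T f \<in> L2 L)
     \<and> (\<forall>f\<in>L2 L. \<forall>g\<in>L2 L. ae_eq L f g \<longrightarrow> ae_eq L (T f) (T g))
     \<and> (\<forall>f\<in>L2 L. \<forall>g\<in>L2 L. \<forall>a b::complex.
          ae_eq L (T (\<lambda>x. a * f x + b * g x)) (\<lambda>x. a * T f x + b * T g x))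
     \<and> (\<exists>C. \<forall>f\<in>L2 L. l2_norm L (T f) \<le> C * l2_norm L f)"

definition riesz_basis :: "real \<Rightarrow> (int \<Rightarrow> real \<Rightarrow> complex) \<Rightarrow> bool" where
  "riesz_basis L \<phi> \<longleftrightarrow>
     (\<exists>e T S. orthonormal_basis L e
        \<and> bounded_linear_L2 L T \<and> bounded_linear_L2 L S
        \<and> (\<forall>f\<in>L2 L. ae_eq L (S (T f)) f \<and> ae_eq L (T (S f)) f)
        \<and> (\<forall>k. ae_eq L (T (e k)) (\<phi> k)))"

definition lam :: "real \<Rightarrow> (real \<Rightarrow> complex) \<Rightarrow> int \<Rightarrow> complex" where
  "lam L g k = (if k = 0 then (LINT x|lebesgue_on {0..L}. cnj (g x))
                else 2 * \<i> * of_int k * of_real pi / of_real L)"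

definition phi :: "real \<Rightarrow> (real \<Rightarrow> complex) \<Rightarrow> int \<Rightarrow> real \<Rightarrow> complex" where
  "phi L g k x = (if k = 0 then 1
     else exp (- lam L g k * of_real x)
          + 1 / (lam L g k - lam L g 0)
            * (LINT s|lebesgue_on {0..L}. cnj (g s) * exp (- lam L g k * of_real s)))"

end

theory Submission
  imports Defs
begin

text \<open>
  Write e_k(x) = exp(2 pi i k x / L) / sqrt L for the standard orthonormal basis of L^2(0,L);
  its completeness follows by truncating, approximating bounded functions by continuous
  periodic ones, and applying Stone-Weierstrass on the circle. For k \<noteq> 0 the eigenfunction
  phi_k is sqrt L * e_{-k} plus the constant c_k, and c_k = m(exp(-\<lambda>_k x)) for a bounded
  functional m obtained by solving y' + \<lambda>_0 y = -f, which is possible in L-periodic functions on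
  the exponentials exp(-\<lambda>_k x) because \<lambda>_0 \<noteq> \<lambda>_k. Corrected to vanish on constants, m gives
  phi_k = T e_{-k} with T f = sqrt L * f + l(f) * 1, a rank-one perturbation of a multiple of
  the identity with l(1) = 0, hence boundedly invertible. Likewise
  exp(-conj(\<lambda>_k) t) = sqrt L * e_k(t) + [k = 0] (exp(-conj(\<lambda>_0) t) - 1) is a rank-one
  perturbation, invertible because exp(-conj(\<lambda>_0) t) has nonzero integral over [0,L].
  Finally phi_k(L) = 1 + c_k with |c_k| \<le> \<parallel>g\<parallel>_1 / |\<lambda>_k - \<lambda>_0| \<rightarrow> 0, so only finitely many
  |phi_k(L)| can be small.
\<close>

section \<open>Square-integrable functions on [0,L]\<close>

lemma finite_measure_lebesgue_on_interval: "finite_measure (lebesgue_on {a..b::real})"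
  by (rule finite_measure_lebesgue_on) auto

lemma measure_lebesgue_on_interval:
  "a \<le> b \<Longrightarrow> measure (lebesgue_on {a..b::real}) {a..b} = b - a"
  by (simp add: measure_restrict_space)

lemma AE_lebesgue_on_interval_iff:
  "(AE x in lebesgue_on {a..b::real}. P x) \<longleftrightarrow> (AE x in lebesgue. x \<in> {a..b} \<longrightarrow> P x)"
  by (rule AE_restrict_space_iff) simp

lemma L2_D:
  assumes "f \<in> L2 L"
  shows "f \<in> borel_measurable (lebesgue_on {0..L})"
    and "integrable (lebesgue_on {0..L}) (\<lambda>x. (cmod (f x))\<^sup>2)"
  using assms by (auto simp: L2_def)

lemma L2_I:
  assumes "f \<in> borel_measurable (lebesgue_on {0..L})"
    and "integrable (lebesgue_on {0..L}) h"
    and "\<And>x. x \<in> {0..L} \<Longrightarrow> (cmod (f x))\<^sup>2 \<le> h x"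
  shows "f \<in> L2 L"
  unfolding L2_def
proof safe
  show "integrable (lebesgue_on {0..L}) (\<lambda>x. (cmod (f x))\<^sup>2)"
  proof (rule Bochner_Integration.integrable_bound[OF assms(2)])
    show "(\<lambda>x. (cmod (f x))\<^sup>2) \<in> borel_measurable (lebesgue_on {0..L})"
      using assms(1) by measurable
    show "AE x in lebesgue_on {0..L}. norm ((cmod (f x))\<^sup>2) \<le> norm (h x)"
      using assms(3) by (intro AE_I2) force
  qed
qed (use assms in auto)

lemma L2_integrable:
  assumes "f \<in> L2 L"
  shows "integrable (lebesgue_on {0..L}) f"
proof (rule Bochner_Integration.integrable_bound)
  show "integrable (lebesgue_on {0..L}) (\<lambda>x. 1 + (cmod (f x))\<^sup>2)"
    using L2_D[OF assms] finite_measure_lebesgue_on_interval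
    by (intro Bochner_Integration.integrable_add finite_measure.integrable_const)
  have "t \<le> 1 + t\<^sup>2" for t :: real
    using zero_le_power2[of "t - 1/2"] by (simp add: power2_eq_square algebra_simps)
  then show "AE x in lebesgue_on {0..L}. norm (f x) \<le> norm (1 + (cmod (f x))\<^sup>2)"
    by (intro AE_I2) (simp add: add_nonneg_nonneg)
qed (use L2_D[OF assms] in simp)

lemma norm_add_squared_le: "(norm (a + b))\<^sup>2 \<le> 2 * (norm a)\<^sup>2 + 2 * (norm b)\<^sup>2"
proof -
  have "(norm (a + b))\<^sup>2 \<le> (norm a + norm b)\<^sup>2"
    by (simp add: norm_triangle_ineq power_mono)
  also have "\<dots> \<le> 2 * (norm a)\<^sup>2 + 2 * (norm b)\<^sup>2"
    using zero_le_power2[of "norm a - norm b"] by (simp add: power2_eq_square algebra_simps)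
  finally show ?thesis .
qed

lemma L2_lincomb:
  assumes "f \<in> L2 L" "g \<in> L2 L"
  shows "(\<lambda>x. a * f x + b * g x) \<in> L2 L"
proof (rule L2_I)
  show "(\<lambda>x. a * f x + b * g x) \<in> borel_measurable (lebesgue_on {0..L})"
    using L2_D[OF assms(1)] L2_D[OF assms(2)] by measurable
  show "integrable (lebesgue_on {0..L})
      (\<lambda>x. 2 * (cmod a)\<^sup>2 * (cmod (f x))\<^sup>2 + 2 * (cmod b)\<^sup>2 * (cmod (g x))\<^sup>2)"
    using L2_D[OF assms(1)] L2_D[OF assms(2)]
    by (intro Bochner_Integration.integrable_add integrable_mult_right)
  show "(cmod (a * f x + b * g x))\<^sup>2 \<le> 2 * (cmod a)\<^sup>2 * (cmod (f x))\<^sup>2 + 2 * (cmod b)\<^sup>2 * (cmod (g x))\<^sup>2"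
    for x using norm_add_squared_le[of "a * f x" "b * g x"] by (simp add: norm_mult power_mult_distrib)
qed

lemma L2_diff: "f \<in> L2 L \<Longrightarrow> g \<in> L2 L \<Longrightarrow> (\<lambda>x. f x - g x) \<in> L2 L"
  using L2_lincomb[of f L g 1 "-1"] by simp

lemma L2_bounded:
  assumes "f \<in> borel_measurable (lebesgue_on {0..L})" "\<And>x. x \<in> {0..L} \<Longrightarrow> cmod (f x) \<le> B"
  shows "f \<in> L2 L"
proof (rule L2_I[OF assms(1)])
  show "integrable (lebesgue_on {0..L}) (\<lambda>x. B\<^sup>2)"
    by (intro finite_measure.integrable_const finite_measure_lebesgue_on_interval)
  show "x \<in> {0..L} \<Longrightarrow> (cmod (f x))\<^sup>2 \<le> B\<^sup>2" for x
    using assms(2) by (simp add: power_mono)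
qed

lemma continuous_on_interval_bound:
  fixes f :: "real \<Rightarrow> 'a::real_normed_vector"
  assumes "continuous_on {a..b} f"
  obtains B where "B \<ge> 0" "\<And>x. x \<in> {a..b} \<Longrightarrow> norm (f x) \<le> B"
proof -
  have "compact (f ` {a..b})" using assms by (intro compact_continuous_image) auto
  then obtain B where "\<forall>y\<in>f ` {a..b}. norm y \<le> B"
    using compact_imp_bounded bounded_iff by metis
  then show ?thesis using that[of "max B 0"] by force
qed

lemma L2_continuous: "continuous_on {0..L} f \<Longrightarrow> f \<in> L2 L"
  by (metis L2_bounded continuous_imp_measurable_on_sets_lebesgue continuous_on_interval_bound
      sets_lebesgue_on_refl atLeastAtMost_borel sets_completionI_sets sets_lborel)

lemma L2_cnj: "g \<in> L2 L \<Longrightarrow> (\<lambda>x. cnj (g x)) \<in> L2 L"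
  unfolding L2_def
  using measurable_compose[OF _ borel_measurable_continuous_onI[OF continuous_on_cnj[OF continuous_on_id]]]
  by auto

lemma integrable_continuous_mult:
  assumes f: "integrable (lebesgue_on {a..b}) f" and u: "continuous_on {a..b::real} u"
  shows "integrable (lebesgue_on {a..b}) (\<lambda>x. u x * f x :: complex)"
proof -
  obtain B where B: "B \<ge> 0" "\<And>x. x \<in> {a..b} \<Longrightarrow> cmod (u x) \<le> B"
    using continuous_on_interval_bound[OF u] by blast
  have "u \<in> borel_measurable (lebesgue_on {a..b})"
    by (intro continuous_imp_measurable_on_sets_lebesgue u) auto
  then have "(\<lambda>x. u x * f x) \<in> borel_measurable (lebesgue_on {a..b})"
    using borel_measurable_integrable[OF f] by measurable
  then show ?thesis
    using B by (intro Bochner_Integration.integrable_bound[OF integrable_mult_right[OF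
          integrable_norm[OF f], of B]] AE_I2)
      (auto simp: norm_mult mult_right_mono)
qed

lemma integrable_continuous_mult_L2:
  "f \<in> L2 L \<Longrightarrow> continuous_on {0..L} u \<Longrightarrow> integrable (lebesgue_on {0..L}) (\<lambda>x. u x * f x)"
  by (rule integrable_continuous_mult[OF L2_integrable])

lemma L1_le_L2:
  assumes "f \<in> L2 L" "0 < L"
  shows "(LINT x|lebesgue_on {0..L}. cmod (f x)) \<le> sqrt L * l2_norm L f"
proof -
  define A where "A = (LINT x|lebesgue_on {0..L}. cmod (f x))"
  define B where "B = (LINT x|lebesgue_on {0..L}. (cmod (f x))\<^sup>2)"
  define m where "m = A / L"
  have "0 \<le> (LINT x|lebesgue_on {0..L}. (cmod (f x) - m)\<^sup>2)"
    by (intro integral_nonneg_AE) auto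
  also have "\<dots> = (LINT x|lebesgue_on {0..L}. (cmod (f x))\<^sup>2 + ((- 2 * m) * cmod (f x) + m\<^sup>2))"
    by (intro Bochner_Integration.integral_cong) (auto simp: power2_diff)
  also have "\<dots> = B + ((- 2 * m) * A + L * m\<^sup>2)"
    using L2_D(2)[OF assms(1)] integrable_norm[OF L2_integrable[OF assms(1)]] assms(2)
    by (simp add: A_def B_def finite_measure_lebesgue_on_interval
        finite_measure.integrable_const measure_lebesgue_on_interval)
  also have "\<dots> = (L * B - A\<^sup>2) / L"
    using assms(2) by (simp add: m_def field_simps power2_eq_square)
  finally have "A\<^sup>2 \<le> L * B" using assms(2) by (simp add: zero_le_divide_iff)
  then have "A \<le> sqrt (L * B)" by (rule real_le_rsqrt)
  then show ?thesis by (simp add: A_def B_def l2_norm_def real_sqrt_mult)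
qed

section \<open>The Fourier basis\<close>

definition fourier_freq :: "real \<Rightarrow> int \<Rightarrow> complex" where
  "fourier_freq L k = 2 * \<i> * of_int k * of_real pi / of_real L"

definition fourier_exp :: "real \<Rightarrow> int \<Rightarrow> real \<Rightarrow> complex" where
  "fourier_exp L k t = exp (fourier_freq L k * of_real t)"

lemma fourier_freq_0 [simp]: "fourier_freq L 0 = 0"
  by (simp add: fourier_freq_def)

lemma fourier_freq_add: "fourier_freq L (j + k) = fourier_freq L j + fourier_freq L k"
  by (simp add: fourier_freq_def ring_distribs add_divide_distrib)

lemma fourier_freq_uminus: "fourier_freq L (- k) = - fourier_freq L k"
  by (simp add: fourier_freq_def)

lemma cnj_fourier_freq: "cnj (fourier_freq L k) = - fourier_freq L k"
  by (simp add: fourier_freq_def)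

lemma fourier_freq_eq_0_iff: "L \<noteq> 0 \<Longrightarrow> fourier_freq L k = 0 \<longleftrightarrow> k = 0"
  by (simp add: fourier_freq_def)

lemma norm_fourier_freq: "cmod (fourier_freq L k) = 2 * pi * \<bar>real_of_int k\<bar> / \<bar>L\<bar>"
  by (simp add: fourier_freq_def norm_mult norm_divide)

lemma exp_eq_1_iff_fourier_freq:
  assumes "L > 0"
  shows "exp (a * of_real L) = 1 \<longleftrightarrow> (\<exists>k. a = fourier_freq L k)"
proof
  assume "exp (a * of_real L) = 1"
  then obtain k :: int where "Re (a * of_real L) = 0" "Im (a * of_real L) = of_int (2 * k) * pi"
    by (auto simp: exp_eq_1)
  then have "a = fourier_freq L k"
    using assms by (simp add: complex_eq_iff fourier_freq_def field_simps)
  then show "\<exists>k. a = fourier_freq L k" ..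
next
  assume "\<exists>k. a = fourier_freq L k"
  then obtain k where "a * of_real L = 2 * of_int k * pi * \<i>"
    using assms by (auto simp: fourier_freq_def field_simps)
  then show "exp (a * of_real L) = 1"
    using exp_integer_2pi[of "of_int k"] by simp
qed

lemma exp_fourier_freq_L_eq_1: "L > 0 \<Longrightarrow> exp (fourier_freq L k * of_real L) = 1"
  using exp_eq_1_iff_fourier_freq by blast

lemma fourier_exp_mult: "fourier_exp L j t * fourier_exp L k t = fourier_exp L (j + k) t"
  by (simp add: fourier_exp_def fourier_freq_add exp_add[symmetric] distrib_right)

lemma cnj_fourier_exp: "cnj (fourier_exp L k t) = fourier_exp L (- k) t"
  by (simp add: fourier_exp_def exp_cnj cnj_fourier_freq fourier_freq_uminus)

lemma fourier_exp_0 [simp]: "fourier_exp L 0 t = 1"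
  by (simp add: fourier_exp_def)

lemma continuous_on_fourier_exp [continuous_intros]: "continuous_on S (fourier_exp L k)"
  unfolding fourier_exp_def by (intro continuous_intros)

lemma integral_exp_interval:
  fixes a :: complex
  assumes "0 \<le> T" "a \<noteq> 0"
  shows "(LINT x|lebesgue_on {0..T}. exp (a * of_real x)) = (exp (a * of_real T) - 1) / a"
proof -
  have "continuous_on {0..T} (\<lambda>x. exp (a * of_real x))"
    by (intro continuous_intros)
  from lebesgue_integral_eq_integral[OF continuous_imp_integrable_real[OF this]]
  show ?thesis using integral_exp[OF assms] by simp
qed

lemma integral_fourier_exp:
  assumes "L > 0"
  shows "(LINT x|lebesgue_on {0..L}. fourier_exp L k x) = (if k = 0 then of_real L else 0)"
proof (cases "k = 0")
  case True
  then show ?thesis using assms by (simp add: measure_lebesgue_on_interval scaleR_conv_of_real)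
next
  case False
  then show ?thesis
    using assms integral_exp_interval[of L "fourier_freq L k"] exp_fourier_freq_L_eq_1[of L k]
      fourier_freq_eq_0_iff[of L k]
    by (simp add: fourier_exp_def[abs_def])
qed

definition fourier_basis :: "real \<Rightarrow> int \<Rightarrow> real \<Rightarrow> complex" where
  "fourier_basis L k t = fourier_exp L k t / of_real (sqrt L)"

lemma fourier_exp_L2: "fourier_exp L k \<in> L2 L"
  by (intro L2_continuous continuous_intros)

lemma fourier_basis_L2: "fourier_basis L k \<in> L2 L"
  using L2_lincomb[OF fourier_exp_L2 fourier_exp_L2, where a = "1 / of_real (sqrt L)" and b = 0]
  by (simp add: fourier_basis_def[abs_def])

lemma l2_inner_fourier_basis:
  assumes "L > 0"
  shows "l2_inner L (fourier_basis L j) (fourier_basis L k) = (if j = k then 1 else 0)"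
proof -
  have "l2_inner L (fourier_basis L j) (fourier_basis L k)
      = (LINT x|lebesgue_on {0..L}. fourier_exp L (j - k) x) / of_real L"
    unfolding l2_inner_def fourier_basis_def integral_divide_zero[symmetric]
    using assms by (intro Bochner_Integration.integral_cong)
      (auto simp: cnj_fourier_exp fourier_exp_mult simp flip: of_real_mult)
  then show ?thesis
    using assms by (simp add: integral_fourier_exp)
qed

definition trig_poly :: "real \<Rightarrow> (real \<Rightarrow> complex) \<Rightarrow> bool" where
  "trig_poly L P \<longleftrightarrow> (\<exists>F c. finite F \<and> P = (\<lambda>t. \<Sum>k\<in>F. c k * fourier_exp L k t))"

lemma trig_poly_fourier_exp: "trig_poly L (\<lambda>t. a * fourier_exp L k t)"
  unfolding trig_poly_def by (intro exI[of _ "{k}"] exI[of _ "\<lambda>_. a"]) simp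

lemma trig_poly_const: "trig_poly L (\<lambda>t. a)"
  using trig_poly_fourier_exp[of L a 0] by simp

lemma trig_poly_add:
  assumes "trig_poly L P" "trig_poly L Q"
  shows "trig_poly L (\<lambda>t. P t + Q t)"
proof -
  obtain F c where F: "finite F" "P = (\<lambda>t. \<Sum>k\<in>F. c k * fourier_exp L k t)"
    using assms(1) unfolding trig_poly_def by blast
  obtain G d where G: "finite G" "Q = (\<lambda>t. \<Sum>k\<in>G. d k * fourier_exp L k t)"
    using assms(2) unfolding trig_poly_def by blast
  have "(\<lambda>t. P t + Q t) = (\<lambda>t. \<Sum>k\<in>F \<union> G.
      ((if k \<in> F then c k else 0) + (if k \<in> G then d k else 0)) * fourier_exp L k t)"
  proof
    fix t
    have "P t = (\<Sum>k\<in>F \<union> G. (if k \<in> F then c k else 0) * fourier_exp L k t)"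
      unfolding F(2) using F(1) G(1) by (intro sum.mono_neutral_cong_left) auto
    moreover have "Q t = (\<Sum>k\<in>F \<union> G. (if k \<in> G then d k else 0) * fourier_exp L k t)"
      unfolding G(2) using F(1) G(1) by (intro sum.mono_neutral_cong_left) auto
    ultimately show "P t + Q t = (\<Sum>k\<in>F \<union> G.
        ((if k \<in> F then c k else 0) + (if k \<in> G then d k else 0)) * fourier_exp L k t)"
      by (simp add: sum.distrib[symmetric] distrib_right)
  qed
  then show ?thesis unfolding trig_poly_def using F(1) G(1) by (intro exI[of _ "F \<union> G"]) auto
qed

lemma trig_poly_cmult:
  assumes "trig_poly L P"
  shows "trig_poly L (\<lambda>t. a * P t)"
proof -
  obtain F c where F: "finite F" "P = (\<lambda>t. \<Sum>k\<in>F. c k * fourier_exp L k t)"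
    using assms unfolding trig_poly_def by blast
  then have "(\<lambda>t. a * P t) = (\<lambda>t. \<Sum>k\<in>F. (a * c k) * fourier_exp L k t)"
    by (simp add: sum_distrib_left mult.assoc)
  then show ?thesis unfolding trig_poly_def using F(1) by (intro exI[of _ F]) auto
qed

lemma trig_poly_sum:
  "finite I \<Longrightarrow> (\<And>i. i \<in> I \<Longrightarrow> trig_poly L (P i)) \<Longrightarrow> trig_poly L (\<lambda>t. \<Sum>i\<in>I. P i t)"
proof (induction I rule: finite_induct)
  case empty
  then show ?case using trig_poly_const[of L 0] by simp
next
  case (insert i I)
  then show ?case using trig_poly_add[of L "P i" "\<lambda>t. \<Sum>i\<in>I. P i t"] by simp
qed

lemma trig_poly_mult:
  assumes "trig_poly L P" "trig_poly L Q"
  shows "trig_poly L (\<lambda>t. P t * Q t)"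
proof -
  obtain F c where F: "finite F" "P = (\<lambda>t. \<Sum>k\<in>F. c k * fourier_exp L k t)"
    using assms(1) unfolding trig_poly_def by blast
  obtain G d where G: "finite G" "Q = (\<lambda>t. \<Sum>k\<in>G. d k * fourier_exp L k t)"
    using assms(2) unfolding trig_poly_def by blast
  have "(\<lambda>t. P t * Q t) = (\<lambda>t. \<Sum>i\<in>F. \<Sum>j\<in>G. (c i * d j) * fourier_exp L (i + j) t)"
    unfolding F(2) G(2) sum_product
    by (intro ext sum.cong refl) (simp add: fourier_exp_mult[symmetric] mult_ac)
  moreover have "trig_poly L (\<lambda>t. \<Sum>i\<in>F. \<Sum>j\<in>G. (c i * d j) * fourier_exp L (i + j) t)"
    using F(1) G(1) by (intro trig_poly_sum trig_poly_fourier_exp)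
  ultimately show ?thesis by simp
qed

lemma trig_poly_continuous: "trig_poly L P \<Longrightarrow> continuous_on S P"
  unfolding trig_poly_def
  by (auto intro!: continuous_on_sum continuous_on_mult continuous_on_const continuous_on_fourier_exp)

section \<open>Density of trigonometric polynomials\<close>

lemma Re_Im_lincomb_eq:
  "complex_of_real (Re z * c + Im z * d)
    = ((of_real c - \<i> * of_real d) / 2) * z + ((of_real c + \<i> * of_real d) / 2) * cnj z"
  by (simp add: complex_eq_iff algebra_simps add_divide_distrib[symmetric])

lemma trig_poly_real_polynomial:
  assumes "real_polynomial_function q"
  shows "trig_poly L (\<lambda>t. complex_of_real (q (fourier_exp L 1 t)))"
  using assms
proof (induction rule: real_polynomial_function.induct)
  case (linear f)
  interpret bounded_linear f by fact
  have f_eq: "f z = Re z * f 1 + Im z * f \<i>" for z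
  proof -
    have "f z = f (Re z *\<^sub>R 1 + Im z *\<^sub>R \<i>)"
      by (rule arg_cong[where f = f]) (simp add: complex_eq_iff)
    then show ?thesis by (simp add: add scaleR)
  qed
  have "(\<lambda>t. complex_of_real (f (fourier_exp L 1 t)))
      = (\<lambda>t. ((of_real (f 1) - \<i> * of_real (f \<i>)) / 2) * fourier_exp L 1 t
        + ((of_real (f 1) + \<i> * of_real (f \<i>)) / 2) * fourier_exp L (- 1) t)"
    unfolding f_eq[of "fourier_exp L 1 _"] cnj_fourier_exp[symmetric] Re_Im_lincomb_eq ..
  then show ?case
    by (simp only: trig_poly_add trig_poly_fourier_exp)
next
  case (const c)
  show ?case using trig_poly_const by simp
next
  case (add f g)
  then show ?case using trig_poly_add by simp
next
  case (mult f g)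
  then show ?case using trig_poly_mult by simp
qed

lemma trig_poly_polynomial:
  assumes "polynomial_function (p :: complex \<Rightarrow> complex)"
  shows "trig_poly L (\<lambda>t. p (fourier_exp L 1 t))"
proof -
  have "real_polynomial_function (Re \<circ> p)" "real_polynomial_function (Im \<circ> p)"
    using assms bounded_linear_Re bounded_linear_Im by (auto simp: polynomial_function_def)
  then have "trig_poly L (\<lambda>t. complex_of_real (Re (p (fourier_exp L 1 t))))"
    "trig_poly L (\<lambda>t. complex_of_real (Im (p (fourier_exp L 1 t))))"
    by (auto dest: trig_poly_real_polynomial[where L = L] simp: o_def)
  moreover have "(\<lambda>t. p (fourier_exp L 1 t)) = (\<lambda>t. complex_of_real (Re (p (fourier_exp L 1 t)))
      + \<i> * complex_of_real (Im (p (fourier_exp L 1 t))))"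
    by (intro ext) (simp add: complex_eq_iff)
  ultimately show ?thesis
    by (simp only: trig_poly_add trig_poly_cmult)
qed

lemma fourier_exp_1_eq_cases:
  assumes "L > 0" "s \<in> {0..L}" "t \<in> {0..L}" "fourier_exp L 1 s = fourier_exp L 1 t"
  shows "s = t \<or> {s, t} = {0, L}"
proof -
  have "exp (fourier_freq L 1 * of_real (s - t)) = 1"
    using assms(4) by (simp add: fourier_exp_def ring_distribs exp_diff)
  then obtain n :: int where "2 * pi * (s - t) / L = 2 * of_int n * pi"
    by (auto simp: exp_eq_1 fourier_freq_def)
  then have "(s - t) * (2 * pi) = (of_int n * L) * (2 * pi)"
    using assms(1) by (simp add: field_simps)
  then have n: "s - t = of_int n * L"
    by simp
  have "\<bar>of_int n * L\<bar> \<le> 1 * L"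
    using assms(2,3) n by auto
  then have "\<bar>of_int n\<bar> \<le> (1::real)"
    using assms(1) by (simp add: abs_mult)
  then have "n = -1 \<or> n = 0 \<or> n = 1" by linarith
  then show ?thesis using n assms(2,3) by auto
qed

lemma periodic_continuous_factors_through_circle:
  assumes L: "L > 0" and k: "continuous_on {0..L} k" and per: "k 0 = k L"
  obtains H where "continuous_on (fourier_exp L 1 ` {0..L}) H"
    "\<And>t. t \<in> {0..L} \<Longrightarrow> H (fourier_exp L 1 t) = k t"
proof -
  let ?\<tau> = "fourier_exp L 1"
  have q: "quotient_map (top_of_set {0..L}) (top_of_set (?\<tau> ` {0..L})) ?\<tau>"
    by (intro continuous_imp_quotient_map)
      (auto simp: continuous_map_subtopology_eu compact_space_subtopology compactin_euclidean_iff
        Hausdorff_space_subtopology continuous_intros)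
  have kc: "continuous_map (top_of_set {0..L}) euclidean k"
    using k by (simp add: continuous_map_iff_continuous)
  show ?thesis
  proof (rule quotient_map_lift_exists[OF q kc])
    fix s t assume "s \<in> topspace (top_of_set {0..L})" "t \<in> topspace (top_of_set {0..L})"
      "?\<tau> s = ?\<tau> t"
    then have "s = t \<or> {s, t} = {0, L}"
      using fourier_exp_1_eq_cases[OF L] by simp
    then show "k s = k t"
      using per by (auto simp: doubleton_eq_iff)
  next
    fix H assume "continuous_map (top_of_set (?\<tau> ` {0..L})) euclidean H"
      "\<And>t. t \<in> topspace (top_of_set {0..L}) \<Longrightarrow> H (?\<tau> t) = k t"
    then show thesis
      using that by (simp add: continuous_map_iff_continuous)
  qed
qed

lemma trig_poly_uniform_approx:
  assumes L: "L > 0" and k: "continuous_on {0..L} k" and per: "k 0 = k L" and \<eta>: "\<eta> > 0"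
  obtains P where "trig_poly L P" "\<And>t. t \<in> {0..L} \<Longrightarrow> cmod (k t - P t) < \<eta>"
proof -
  obtain H where H: "continuous_on (fourier_exp L 1 ` {0..L}) H"
    "\<And>t. t \<in> {0..L} \<Longrightarrow> H (fourier_exp L 1 t) = k t"
    using periodic_continuous_factors_through_circle[OF L k per] by blast
  obtain p where p: "polynomial_function p"
    "\<And>z. z \<in> fourier_exp L 1 ` {0..L} \<Longrightarrow> cmod (H z - p z) < \<eta>"
    using Stone_Weierstrass_polynomial_function[OF _ H(1) \<eta>]
    by (metis compact_continuous_image compact_Icc continuous_on_fourier_exp)
  show ?thesis
    using that[OF trig_poly_polynomial[OF p(1)]] p(2) H(2) by force
qed

definition l2_approximable :: "real \<Rightarrow> (real \<Rightarrow> complex) set \<Rightarrow> (real \<Rightarrow> complex) \<Rightarrow> bool" where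
  "l2_approximable L S f \<longleftrightarrow>
     (\<forall>\<epsilon>>0. \<exists>h\<in>S. (LINT x|lebesgue_on {0..L}. (cmod (f x - h x))\<^sup>2) < \<epsilon>)"

lemma l2_approximable_trans:
  assumes f: "f \<in> L2 L" and S: "S \<subseteq> L2 L" and T: "T \<subseteq> L2 L"
    and fS: "l2_approximable L S f" and ST: "\<And>h. h \<in> S \<Longrightarrow> l2_approximable L T h"
  shows "l2_approximable L T f"
  unfolding l2_approximable_def
proof (intro allI impI)
  fix \<epsilon> :: real assume "\<epsilon> > 0"
  then obtain h where h: "h \<in> S" "(LINT x|lebesgue_on {0..L}. (cmod (f x - h x))\<^sup>2) < \<epsilon> / 4"
    using fS unfolding l2_approximable_def by (meson zero_less_divide_iff zero_less_numeral)
  then obtain p where p: "p \<in> T" "(LINT x|lebesgue_on {0..L}. (cmod (h x - p x))\<^sup>2) < \<epsilon> / 4"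
    using ST \<open>\<epsilon> > 0\<close> unfolding l2_approximable_def by (meson zero_less_divide_iff zero_less_numeral)
  have hL: "h \<in> L2 L" and pL: "p \<in> L2 L" using h(1) p(1) S T by auto
  have i1: "integrable (lebesgue_on {0..L}) (\<lambda>x. (cmod (f x - h x))\<^sup>2)"
    and i2: "integrable (lebesgue_on {0..L}) (\<lambda>x. (cmod (h x - p x))\<^sup>2)"
    using L2_D(2)[OF L2_diff[OF f hL]] L2_D(2)[OF L2_diff[OF hL pL]] by auto
  have "(LINT x|lebesgue_on {0..L}. (cmod (f x - p x))\<^sup>2)
      \<le> (LINT x|lebesgue_on {0..L}. 2 * (cmod (f x - h x))\<^sup>2 + 2 * (cmod (h x - p x))\<^sup>2)"
  proof (intro integral_mono)
    show "(cmod (f x - p x))\<^sup>2 \<le> 2 * (cmod (f x - h x))\<^sup>2 + 2 * (cmod (h x - p x))\<^sup>2" for x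
      using norm_add_squared_le[of "f x - h x" "h x - p x"] by simp
  qed (use i1 i2 L2_D(2)[OF L2_diff[OF f pL]] in auto)
  also have "\<dots> < \<epsilon>"
    using h(2) p(2) i1 i2 by simp
  finally show "\<exists>p\<in>T. (LINT x|lebesgue_on {0..L}. (cmod (f x - p x))\<^sup>2) < \<epsilon>"
    using p(1) by blast
qed

lemma l2_approximable_dominated:
  assumes hS: "\<And>n. h n \<in> S"
    and meas: "f \<in> borel_measurable (lebesgue_on {0..L})" "\<And>n. h n \<in> borel_measurable (lebesgue_on {0..L})"
    and lim: "AE x in lebesgue_on {0..L}. (\<lambda>n. h n x) \<longlonglongrightarrow> f x"
    and w: "integrable (lebesgue_on {0..L}) w" "\<And>n x. x \<in> {0..L} \<Longrightarrow> (cmod (f x - h n x))\<^sup>2 \<le> w x"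
  shows "l2_approximable L S f"
  unfolding l2_approximable_def
proof (intro allI impI)
  fix \<epsilon> :: real assume "\<epsilon> > 0"
  have "(\<lambda>n. LINT x|lebesgue_on {0..L}. (cmod (f x - h n x))\<^sup>2)
      \<longlonglongrightarrow> (LINT x|lebesgue_on {0..L}. 0)"
  proof (rule integral_dominated_convergence[OF _ _ w(1)])
    show "AE x in lebesgue_on {0..L}. (\<lambda>n. (cmod (f x - h n x))\<^sup>2) \<longlonglongrightarrow> 0"
      using lim by eventually_elim (auto intro: tendsto_eq_intros simp: LIM_zero_iff tendsto_norm_zero_iff)
    show "AE x in lebesgue_on {0..L}. norm ((cmod (f x - h n x))\<^sup>2) \<le> w x" for n
      using w(2) by (intro AE_I2) auto
  qed (use meas in auto)
  then obtain n where "(LINT x|lebesgue_on {0..L}. (cmod (f x - h n x))\<^sup>2) < \<epsilon>"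
    using \<open>\<epsilon> > 0\<close> LIMSEQ_D by fastforce
  then show "\<exists>h\<in>S. (LINT x|lebesgue_on {0..L}. (cmod (f x - h x))\<^sup>2) < \<epsilon>"
    using hS by blast
qed

definition bounded_measurable :: "real \<Rightarrow> (real \<Rightarrow> complex) set" where
  "bounded_measurable L = {h. h \<in> borel_measurable (lebesgue_on {0..L}) \<and> (\<exists>B. \<forall>x\<in>{0..L}. cmod (h x) \<le> B)}"

lemma bounded_measurable_subset_L2: "bounded_measurable L \<subseteq> L2 L"
  unfolding bounded_measurable_def using L2_bounded by blast

lemma L2_approximable_by_bounded:
  assumes f: "f \<in> L2 L"
  shows "l2_approximable L (bounded_measurable L) f"
proof (rule l2_approximable_dominated[where h = "\<lambda>n x. if cmod (f x) \<le> real n then f x else 0"])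
  show "(\<lambda>x. if cmod (f x) \<le> real n then f x else 0) \<in> bounded_measurable L" for n
    using L2_D(1)[OF f] unfolding bounded_measurable_def by (auto intro!: exI[of _ "real n"])
  show "AE x in lebesgue_on {0..L}. (\<lambda>n. if cmod (f x) \<le> real n then f x else 0) \<longlonglongrightarrow> f x"
  proof (intro AE_I2 tendsto_eventually)
    fix x
    obtain N :: nat where "cmod (f x) \<le> real N" using real_arch_simple by blast
    then show "\<forall>\<^sub>F n in sequentially. (if cmod (f x) \<le> real n then f x else 0) = f x"
      unfolding eventually_sequentially by (intro exI[of _ N]) auto
  qed
qed (use L2_D[OF f] in auto)

lemma radial_retraction:
  assumes B: "B > 0"
  obtains r :: "complex \<Rightarrow> complex"
  where "continuous_on UNIV r" "\<And>z. cmod (r z) \<le> B" "\<And>z. cmod z \<le> B \<Longrightarrow> r z = z"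
proof
  show "continuous_on UNIV (\<lambda>z. z * of_real (B / max B (cmod z)))"
    using B by (intro continuous_intros) auto
  show "cmod (z * of_real (B / max B (cmod z))) \<le> B" for z
  proof -
    have "cmod (z * of_real (B / max B (cmod z))) = cmod z * B / max B (cmod z)"
      using B by (simp add: norm_mult norm_divide)
    also have "\<dots> \<le> B"
      using B by (simp add: divide_le_eq max_def mult.commute mult_left_mono)
    finally show ?thesis .
  qed
  show "cmod z \<le> B \<Longrightarrow> z * of_real (B / max B (cmod z)) = z" for z
    using B by (simp add: max_def)
qed

lemma endpoint_cutoff:
  assumes L: "L > 0"
  obtains c :: "nat \<Rightarrow> real \<Rightarrow> real"
  where "\<And>n. continuous_on UNIV (c n)" "\<And>n. c n 0 = 0" "\<And>n. c n L = 0"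
    "\<And>n x. x \<in> {0..L} \<Longrightarrow> 0 \<le> c n x \<and> c n x \<le> 1"
    "\<And>x. 0 < x \<Longrightarrow> x < L \<Longrightarrow> (\<lambda>n. c n x) \<longlonglongrightarrow> 1"
proof -
  define c :: "nat \<Rightarrow> real \<Rightarrow> real" where "c n x = min 1 (real (Suc n) / L * min x (L - x))" for n x
  have "(\<lambda>n. c n x) \<longlonglongrightarrow> 1" if "0 < x" "x < L" for x
  proof (rule tendsto_eventually)
    define m where "m = min x (L - x)"
    have m: "m > 0" using that by (simp add: m_def)
    obtain N :: nat where N: "L / m < real N" using reals_Archimedean2 by blast
    have "1 \<le> real (Suc n) / L * m" if "n \<ge> N" for n
    proof -
      have "L < real N * m" using N m by (simp add: field_simps)
      also have "\<dots> \<le> real (Suc n) * m" using that m by (intro mult_right_mono) auto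
      finally show ?thesis using L by (simp add: field_simps)
    qed
    then show "\<forall>\<^sub>F n in sequentially. c n x = 1"
      unfolding eventually_sequentially c_def m_def[symmetric] by (metis min.absorb1)
  qed
  moreover have "continuous_on UNIV (c n)" for n
    unfolding c_def by (intro continuous_intros)
  ultimately show ?thesis
    using that[of c] L by (auto simp: c_def)
qed

lemma bounded_approximable_by_periodic_continuous:
  assumes L: "L > 0" and h: "h \<in> bounded_measurable L"
  shows "l2_approximable L {k. continuous_on {0..L} k \<and> k 0 = k L} h"
proof -
  obtain B0 where hm: "h \<in> borel_measurable (lebesgue_on {0..L})"
    and hB0: "\<forall>x\<in>{0..L}. cmod (h x) \<le> B0"
    using h unfolding bounded_measurable_def by blast
  define B where "B = max B0 1"
  have B: "B > 0" and hB: "\<And>x. x \<in> {0..L} \<Longrightarrow> cmod (h x) \<le> B"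
    using hB0 by (auto simp: B_def le_max_iff_disj)
  have "h measurable_on {0..L}"
    using hm measurable_on_iff_borel_measurable[of "{0..L}" h] by simp
  then obtain N g where N: "negligible N" and g: "\<And>n. continuous_on UNIV (g n)"
    and gh: "\<And>x. x \<notin> N \<Longrightarrow> (\<lambda>n. g n x) \<longlonglongrightarrow> (if x \<in> {0..L} then h x else 0)"
    unfolding measurable_on_def by blast
  obtain r where r: "continuous_on UNIV r" "\<And>z. cmod (r z) \<le> B" "\<And>z. cmod z \<le> B \<Longrightarrow> r z = z"
    using radial_retraction[OF B] by blast
  obtain c :: "nat \<Rightarrow> real \<Rightarrow> real" where c: "\<And>n. continuous_on UNIV (c n)" "\<And>n. c n 0 = 0" "\<And>n. c n L = 0"
    "\<And>n x. x \<in> {0..L} \<Longrightarrow> 0 \<le> c n x \<and> c n x \<le> 1"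
    "\<And>x. 0 < x \<Longrightarrow> x < L \<Longrightarrow> (\<lambda>n. c n x) \<longlonglongrightarrow> 1"
    using endpoint_cutoff[OF L] by blast
  define k where "k n x = of_real (c n x) * r (g n x)" for n x
  show ?thesis
  proof (rule l2_approximable_dominated[where h = k and w = "\<lambda>_. (2 * B)\<^sup>2"])
    show "k n \<in> {k. continuous_on {0..L} k \<and> k 0 = k L}" for n
    proof -
      have "continuous_on {0..L} (\<lambda>x. r (g n x))"
        by (rule continuous_on_compose2[OF r(1) continuous_on_subset[OF g]]) auto
      then show ?thesis
        unfolding k_def using c(2,3) continuous_on_subset[OF c(1)]
        by (auto intro!: continuous_intros)
    qed
    then show "k n \<in> borel_measurable (lebesgue_on {0..L})" for n
      by (auto intro: continuous_imp_measurable_on_sets_lebesgue)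
    show "integrable (lebesgue_on {0..L}) (\<lambda>_. (2 * B)\<^sup>2)"
      by (intro finite_measure.integrable_const finite_measure_lebesgue_on_interval)
    show "(cmod (h x - k n x))\<^sup>2 \<le> (2 * B)\<^sup>2" if "x \<in> {0..L}" for n x
    proof -
      have "cmod (k n x) \<le> 1 * B"
        unfolding k_def norm_mult using c(4)[OF that] r(2)[of "g n x"]
        by (intro mult_mono) auto
      then show ?thesis
        using hB[OF that] norm_triangle_ineq4[of "h x" "k n x"] by (intro power_mono) auto
    qed
    have "N \<union> {0, L} \<in> null_sets lebesgue"
      using N by (auto simp: negligible_iff_null_sets intro: null_sets.Un)
    from AE_not_in[OF this] have "AE x in lebesgue_on {0..L}. x \<notin> N \<union> {0, L}"
      unfolding AE_lebesgue_on_interval_iff by eventually_elim auto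
    then show "AE x in lebesgue_on {0..L}. (\<lambda>n. k n x) \<longlonglongrightarrow> h x"
    proof (rule AE_mp, intro AE_I2 impI)
      fix x assume x: "x \<in> space (lebesgue_on {0..L})" "x \<notin> N \<union> {0, L}"
      then have "0 < x" "x < L" by auto
      have "(\<lambda>n. r (g n x)) \<longlonglongrightarrow> r (h x)"
        using gh[of x] x continuous_on_tendsto_compose[OF r(1)] by auto
      then have "(\<lambda>n. k n x) \<longlonglongrightarrow> of_real 1 * r (h x)"
        unfolding k_def by (intro tendsto_intros c(5) \<open>0 < x\<close> \<open>x < L\<close>)
      then show "(\<lambda>n. k n x) \<longlonglongrightarrow> h x"
        using r(3)[OF hB] x by simp
    qed
  qed (use hm in auto)
qed

lemma periodic_continuous_approximable_by_trig_poly: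
  assumes L: "L > 0" and k: "continuous_on {0..L} k" "k 0 = k L"
  shows "l2_approximable L (Collect (trig_poly L)) k"
  unfolding l2_approximable_def
proof (intro allI impI)
  fix \<epsilon> :: real assume "\<epsilon> > 0"
  define \<eta> where "\<eta> = sqrt (\<epsilon> / (2 * L))"
  have \<eta>: "\<eta> > 0" "L * \<eta>\<^sup>2 < \<epsilon>"
    using L \<open>\<epsilon> > 0\<close> by (auto simp: \<eta>_def)
  obtain P where P: "trig_poly L P" "\<And>t. t \<in> {0..L} \<Longrightarrow> cmod (k t - P t) < \<eta>"
    using trig_poly_uniform_approx[OF L k \<eta>(1)] by blast
  have "(LINT x|lebesgue_on {0..L}. (cmod (k x - P x))\<^sup>2) \<le> (LINT x|lebesgue_on {0..L}. \<eta>\<^sup>2)"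
  proof (rule integral_mono)
    have "continuous_on {0..L} (\<lambda>x. k x - P x)"
      using k(1) trig_poly_continuous[OF P(1)] by (intro continuous_intros)
    from L2_D(2)[OF L2_continuous[OF this]]
    show "integrable (lebesgue_on {0..L}) (\<lambda>x. (cmod (k x - P x))\<^sup>2)" .
    show "(cmod (k x - P x))\<^sup>2 \<le> \<eta>\<^sup>2" if "x \<in> space (lebesgue_on {0..L})" for x
      using P(2)[of x] that by (intro power_mono) auto
  qed (auto intro: finite_measure.integrable_const finite_measure_lebesgue_on_interval)
  also have "\<dots> < \<epsilon>"
    using L \<eta>(2) by (simp add: measure_lebesgue_on_interval)
  finally show "\<exists>h\<in>Collect (trig_poly L). (LINT x|lebesgue_on {0..L}. (cmod (k x - h x))\<^sup>2) < \<epsilon>"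
    using P(1) by blast
qed

lemma L2_approximable_by_trig_poly:
  assumes L: "L > 0" and f: "f \<in> L2 L"
  shows "l2_approximable L (Collect (trig_poly L)) f"
proof -
  have trig_L2: "Collect (trig_poly L) \<subseteq> L2 L"
    using L2_continuous trig_poly_continuous by blast
  have cont_L2: "{k. continuous_on {0..L} k \<and> k 0 = k L} \<subseteq> L2 L"
    using L2_continuous by blast
  have "l2_approximable L (Collect (trig_poly L)) h" if "h \<in> bounded_measurable L" for h
    by (rule l2_approximable_trans[OF _ cont_L2 trig_L2 bounded_approximable_by_periodic_continuous[OF L that]])
      (use that bounded_measurable_subset_L2 periodic_continuous_approximable_by_trig_poly[OF L] in auto)
  then show ?thesis
    by (rule l2_approximable_trans[OF f bounded_measurable_subset_L2 trig_L2 L2_approximable_by_bounded[OF f]])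
qed

theorem orthonormal_basis_fourier_basis:
  assumes L: "L > 0"
  shows "orthonormal_basis L (fourier_basis L)"
  unfolding orthonormal_basis_def
proof (intro conjI allI ballI impI)
  fix f :: "real \<Rightarrow> complex" and \<epsilon> :: real
  assume f: "f \<in> L2 L" and "\<epsilon> > 0"
  then have "\<epsilon>\<^sup>2 > 0" by simp
  then obtain P where P: "trig_poly L P" "(LINT x|lebesgue_on {0..L}. (cmod (f x - P x))\<^sup>2) < \<epsilon>\<^sup>2"
    using L2_approximable_by_trig_poly[OF L f] unfolding l2_approximable_def by blast
  obtain F c where F: "finite F" "P = (\<lambda>t. \<Sum>k\<in>F. c k * fourier_exp L k t)"
    using P(1) unfolding trig_poly_def by blast
  have "P x = (\<Sum>k\<in>F. (c k * of_real (sqrt L)) * fourier_basis L k x)" for x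
    unfolding F(2) fourier_basis_def using L by (intro sum.cong) auto
  moreover have "l2_norm L (\<lambda>x. f x - P x) < \<epsilon>"
    unfolding l2_norm_def using P(2) \<open>\<epsilon> > 0\<close> real_sqrt_less_mono by fastforce
  ultimately show "\<exists>F c. finite F \<and> l2_norm L (\<lambda>x. f x - (\<Sum>k\<in>F. c k * fourier_basis L k x)) < \<epsilon>"
    using F(1) by auto
qed (simp_all add: fourier_basis_L2 l2_inner_fourier_basis L)

section \<open>Bounded functionals and rank-one perturbations\<close>

lemma l2_norm_nonneg: "0 \<le> l2_norm L f"
  unfolding l2_norm_def by simp

lemma l2_norm_lincomb_le:
  assumes f: "f \<in> L2 L" and g: "g \<in> L2 L"
  shows "l2_norm L (\<lambda>x. a * f x + b * g x) \<le> sqrt 2 * (cmod a * l2_norm L f + cmod b * l2_norm L g)"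
proof -
  have sq: "(l2_norm L h)\<^sup>2 = (LINT x|lebesgue_on {0..L}. (cmod (h x))\<^sup>2)" for h
    unfolding l2_norm_def by (simp add: integral_nonneg_AE)
  have i: "integrable (lebesgue_on {0..L}) (\<lambda>x. (cmod (f x))\<^sup>2)"
    "integrable (lebesgue_on {0..L}) (\<lambda>x. (cmod (g x))\<^sup>2)"
    using L2_D[OF f] L2_D[OF g] by auto
  have "(l2_norm L (\<lambda>x. a * f x + b * g x))\<^sup>2
      \<le> (LINT x|lebesgue_on {0..L}. 2 * (cmod a)\<^sup>2 * (cmod (f x))\<^sup>2 + 2 * (cmod b)\<^sup>2 * (cmod (g x))\<^sup>2)"
    unfolding sq
  proof (rule integral_mono)
    show "(cmod (a * f x + b * g x))\<^sup>2 \<le> 2 * (cmod a)\<^sup>2 * (cmod (f x))\<^sup>2 + 2 * (cmod b)\<^sup>2 * (cmod (g x))\<^sup>2"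
      for x using norm_add_squared_le[of "a * f x" "b * g x"] by (simp add: norm_mult power_mult_distrib)
  qed (use L2_D(2)[OF L2_lincomb[OF f g]] i in auto)
  also have "\<dots> = 2 * (cmod a * l2_norm L f)\<^sup>2 + 2 * (cmod b * l2_norm L g)\<^sup>2"
    using i by (simp add: power_mult_distrib sq)
  also have "\<dots> \<le> (sqrt 2 * (cmod a * l2_norm L f + cmod b * l2_norm L g))\<^sup>2"
    by (simp add: power_mult_distrib power2_sum l2_norm_nonneg)
  finally show ?thesis
    by (rule power2_le_imp_le) (simp add: l2_norm_nonneg)
qed

definition bounded_functional_L2 :: "real \<Rightarrow> ((real \<Rightarrow> complex) \<Rightarrow> complex) \<Rightarrow> bool" where
  "bounded_functional_L2 L l \<longleftrightarrow>
     (\<forall>f\<in>L2 L. \<forall>g\<in>L2 L. \<forall>a b. l (\<lambda>x. a * f x + b * g x) = a * l f + b * l g)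
     \<and> (\<forall>f\<in>L2 L. \<forall>g\<in>L2 L. ae_eq L f g \<longrightarrow> l f = l g)
     \<and> (\<exists>K. \<forall>f\<in>L2 L. cmod (l f) \<le> K * l2_norm L f)"

lemma bounded_functional_L2I:
  assumes "\<And>f g a b. f \<in> L2 L \<Longrightarrow> g \<in> L2 L \<Longrightarrow> l (\<lambda>x. a * f x + b * g x) = a * l f + b * l g"
    and "\<And>f g. f \<in> L2 L \<Longrightarrow> g \<in> L2 L \<Longrightarrow> ae_eq L f g \<Longrightarrow> l f = l g"
    and "\<And>f. f \<in> L2 L \<Longrightarrow> cmod (l f) \<le> K * l2_norm L f"
  shows "bounded_functional_L2 L l"
  using assms unfolding bounded_functional_L2_def by blast

lemma bounded_functional_L2D:
  assumes "bounded_functional_L2 L l"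
  shows bounded_functional_L2_lincomb_eq:
      "\<And>f g a b. f \<in> L2 L \<Longrightarrow> g \<in> L2 L \<Longrightarrow> l (\<lambda>x. a * f x + b * g x) = a * l f + b * l g"
    and bounded_functional_L2_ae_eq: "\<And>f g. f \<in> L2 L \<Longrightarrow> g \<in> L2 L \<Longrightarrow> ae_eq L f g \<Longrightarrow> l f = l g"
    and bounded_functional_L2_bound: "\<exists>K. \<forall>f\<in>L2 L. cmod (l f) \<le> K * l2_norm L f"
  using assms unfolding bounded_functional_L2_def by blast+

lemma bounded_functional_L2_scale:
  "bounded_functional_L2 L l \<Longrightarrow> f \<in> L2 L \<Longrightarrow> l (\<lambda>x. c * f x) = c * l f"
  using bounded_functional_L2_lincomb_eq[of L l f f c 0] by simp

lemma bounded_functional_L2_lincomb: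
  assumes l: "bounded_functional_L2 L l" and m: "bounded_functional_L2 L m"
  shows "bounded_functional_L2 L (\<lambda>f. c * l f + d * m f)"
proof -
  obtain K M where K: "\<And>f. f \<in> L2 L \<Longrightarrow> cmod (l f) \<le> K * l2_norm L f"
    and M: "\<And>f. f \<in> L2 L \<Longrightarrow> cmod (m f) \<le> M * l2_norm L f"
    using bounded_functional_L2_bound[OF l] bounded_functional_L2_bound[OF m] by blast
  show ?thesis
  proof (rule bounded_functional_L2I[where K = "cmod c * K + cmod d * M"])
    show "c * l (\<lambda>x. a * f x + b * g x) + d * m (\<lambda>x. a * f x + b * g x)
        = a * (c * l f + d * m f) + b * (c * l g + d * m g)"
      if "f \<in> L2 L" "g \<in> L2 L" for f g a b
      using bounded_functional_L2_lincomb_eq[OF l that] bounded_functional_L2_lincomb_eq[OF m that]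
      by (simp add: algebra_simps)
    show "c * l f + d * m f = c * l g + d * m g" if "f \<in> L2 L" "g \<in> L2 L" "ae_eq L f g" for f g
      using bounded_functional_L2_ae_eq[OF l that] bounded_functional_L2_ae_eq[OF m that] by simp
    show "cmod (c * l f + d * m f) \<le> (cmod c * K + cmod d * M) * l2_norm L f" if "f \<in> L2 L" for f
    proof -
      have "cmod (c * l f + d * m f) \<le> cmod c * cmod (l f) + cmod d * cmod (m f)"
        by (metis norm_mult norm_triangle_ineq)
      also have "\<dots> \<le> cmod c * (K * l2_norm L f) + cmod d * (M * l2_norm L f)"
        using K[OF that] M[OF that] by (intro add_mono mult_left_mono) auto
      finally show ?thesis by (simp add: algebra_simps)
    qed
  qed
qed

lemma bounded_linear_L2_rank_one:
  assumes v: "v \<in> L2 L" and l: "bounded_functional_L2 L l"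
  shows "bounded_linear_L2 L (\<lambda>f x. a * f x + l f * v x)"
  unfolding bounded_linear_L2_def
proof (intro conjI ballI allI impI)
  fix f assume "f \<in> L2 L"
  then show "(\<lambda>x. a * f x + l f * v x) \<in> L2 L" by (rule L2_lincomb[OF _ v])
next
  fix f g assume fg: "f \<in> L2 L" "g \<in> L2 L" "ae_eq L f g"
  then have "l f = l g" by (rule bounded_functional_L2_ae_eq[OF l])
  with fg(3) show "ae_eq L (\<lambda>x. a * f x + l f * v x) (\<lambda>x. a * g x + l g * v x)"
    unfolding ae_eq_def by (auto elim!: eventually_mono)
next
  fix f g c d assume fg: "f \<in> L2 L" "g \<in> L2 L"
  show "ae_eq L (\<lambda>x. a * (c * f x + d * g x) + l (\<lambda>x. c * f x + d * g x) * v x)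
      (\<lambda>x. c * (a * f x + l f * v x) + d * (a * g x + l g * v x))"
    unfolding ae_eq_def bounded_functional_L2_lincomb_eq[OF l fg] by (intro AE_I2) (simp add: algebra_simps)
next
  obtain K where K: "\<And>f. f \<in> L2 L \<Longrightarrow> cmod (l f) \<le> K * l2_norm L f"
    using bounded_functional_L2_bound[OF l] by blast
  show "\<exists>C. \<forall>f\<in>L2 L. l2_norm L (\<lambda>x. a * f x + l f * v x) \<le> C * l2_norm L f"
  proof (intro exI ballI)
    fix f assume f: "f \<in> L2 L"
    have "l2_norm L (\<lambda>x. a * f x + l f * v x) \<le> sqrt 2 * (cmod a * l2_norm L f + cmod (l f) * l2_norm L v)"
      by (rule l2_norm_lincomb_le[OF f v])
    also have "\<dots> \<le> sqrt 2 * (cmod a * l2_norm L f + (K * l2_norm L f) * l2_norm L v)"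
      using K[OF f] by (intro mult_left_mono add_left_mono mult_right_mono) (auto simp: l2_norm_nonneg)
    finally show "l2_norm L (\<lambda>x. a * f x + l f * v x) \<le> (sqrt 2 * (cmod a + K * l2_norm L v)) * l2_norm L f"
      by (simp add: algebra_simps)
  qed
qed

text \<open>The inverse of f \<mapsto> \<alpha> f + l(f) v is f \<mapsto> (f - l(f) v / (\<alpha> + l(v))) / \<alpha>.\<close>

lemma riesz_basis_rank_one_perturbation:
  assumes e: "orthonormal_basis L e" and \<alpha>: "\<alpha> \<noteq> 0" and v: "v \<in> L2 L"
    and l: "bounded_functional_L2 L l" and \<beta>: "\<alpha> + l v \<noteq> 0"
    and \<phi>: "\<And>k. ae_eq L (\<lambda>x. \<alpha> * e k x + l (e k) * v x) (\<phi> k)"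
  shows "riesz_basis L \<phi>"
proof -
  define \<beta> where "\<beta> = \<alpha> + l v"
  have lv: "l v = \<beta> - \<alpha>" and "\<beta> \<noteq> 0" using \<beta> by (simp_all add: \<beta>_def)
  define T where "T = (\<lambda>f x. \<alpha> * f x + l f * v x)"
  define m where "m f = - l f / (\<alpha> * \<beta>)" for f
  define S where "S = (\<lambda>f x. (1 / \<alpha>) * f x + m f * v x)"
  have m: "bounded_functional_L2 L m"
  proof -
    have "m = (\<lambda>f. (- 1 / (\<alpha> * \<beta>)) * l f + 0 * l f)"
      by (simp add: m_def fun_eq_iff)
    moreover have "bounded_functional_L2 L (\<lambda>f. (- 1 / (\<alpha> * \<beta>)) * l f + 0 * l f)"
      by (rule bounded_functional_L2_lincomb[OF l l])
    ultimately show ?thesis by (simp only:)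
  qed
  have lin: "l (\<lambda>x. a * f x + b * v x) = a * l f + b * (\<beta> - \<alpha>)" if "f \<in> L2 L" for f a b
    using bounded_functional_L2_lincomb_eq[OF l that v] lv by simp
  have ST: "S (T f) = f" if f: "f \<in> L2 L" for f
  proof -
    have mT: "m (T f) = - l f / \<alpha>"
      unfolding m_def T_def lin[OF f] using \<alpha> \<open>\<beta> \<noteq> 0\<close> by (simp add: field_simps)
    show ?thesis
      unfolding S_def mT using \<alpha> by (simp add: T_def fun_eq_iff field_simps)
  qed
  have TS: "T (S f) = f" if f: "f \<in> L2 L" for f
  proof -
    have lS: "l (S f) = l f / \<beta>"
      unfolding S_def lin[OF f] m_def using \<alpha> \<open>\<beta> \<noteq> 0\<close> by (simp add: field_simps)
    show ?thesis
      unfolding T_def lS using \<alpha> \<open>\<beta> \<noteq> 0\<close> by (simp add: S_def m_def fun_eq_iff field_simps)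
  qed
  show ?thesis
    unfolding riesz_basis_def
  proof (intro exI conjI ballI allI)
    show "bounded_linear_L2 L T" "bounded_linear_L2 L S"
      unfolding T_def S_def by (intro bounded_linear_L2_rank_one v l m)+
    show "ae_eq L (S (T f)) f" "ae_eq L (T (S f)) f" if "f \<in> L2 L" for f
      using ST[OF that] TS[OF that] by (simp_all add: ae_eq_def)
    show "ae_eq L (T (e k)) (\<phi> k)" for k
      unfolding T_def by (rule \<phi>)
  qed (rule e)
qed

lemma orthonormal_basis_reindex:
  assumes e: "orthonormal_basis L e" and h: "bij h"
  shows "orthonormal_basis L (\<lambda>k. e (h k))"
  unfolding orthonormal_basis_def
proof (intro conjI allI ballI impI)
  fix f :: "real \<Rightarrow> complex" and \<epsilon> :: real
  assume "f \<in> L2 L" "\<epsilon> > 0"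
  then obtain F c where F: "finite F" "l2_norm L (\<lambda>x. f x - (\<Sum>k\<in>F. c k * e k x)) < \<epsilon>"
    using e unfolding orthonormal_basis_def by blast
  have "(\<Sum>k\<in>h -` F. c (h k) * e (h k) x) = (\<Sum>k\<in>F. c k * e k x)" for x
    using h by (intro sum.reindex_bij_betw) (auto simp: bij_betw_def bij_def inj_on_def)
  moreover have "finite (h -` F)"
    using F(1) h by (simp add: bij_def finite_vimageI)
  ultimately show "\<exists>F c. finite F \<and> l2_norm L (\<lambda>x. f x - (\<Sum>k\<in>F. c k * e (h k) x)) < \<epsilon>"
    using F(2) by (intro exI[of _ "h -` F"] exI[of _ "\<lambda>k. c (h k)"]) simp
next
  show "e (h k) \<in> L2 L" "l2_inner L (e (h j)) (e (h k)) = (if j = k then 1 else 0)" for j k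
    using e h unfolding orthonormal_basis_def by (auto simp: bij_def inj_eq)
qed

lemma riesz_basis_reindex:
  assumes "riesz_basis L \<phi>" and h: "bij h"
  shows "riesz_basis L (\<lambda>k. \<phi> (h k))"
proof -
  obtain e T S where "orthonormal_basis L e" "bounded_linear_L2 L T" "bounded_linear_L2 L S"
    "\<forall>f\<in>L2 L. ae_eq L (S (T f)) f \<and> ae_eq L (T (S f)) f" "\<forall>k. ae_eq L (T (e k)) (\<phi> k)"
    using assms(1) unfolding riesz_basis_def by blast
  then show ?thesis
    unfolding riesz_basis_def using orthonormal_basis_reindex[OF _ h] by blast
qed

lemma norm_integral_mult_le:
  assumes f: "integrable (lebesgue_on {a..b}) f" and u: "continuous_on {a..b::real} u"
    and B: "\<And>x. x \<in> {a..b} \<Longrightarrow> cmod (u x) \<le> B"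
  shows "cmod (LINT x|lebesgue_on {a..b}. u x * f x) \<le> B * (LINT x|lebesgue_on {a..b}. cmod (f x))"
proof -
  have "cmod (LINT x|lebesgue_on {a..b}. u x * f x) \<le> (LINT x|lebesgue_on {a..b}. cmod (u x * f x))"
    by (rule integral_norm_bound)
  also have "\<dots> \<le> (LINT x|lebesgue_on {a..b}. B * cmod (f x))"
    using integrable_norm[OF integrable_continuous_mult[OF f u]] integrable_norm[OF f] B
    by (intro integral_mono) (auto simp: norm_mult mult_right_mono)
  finally show ?thesis by simp
qed

lemma integral_subinterval_lincomb:
  assumes f: "f \<in> L2 L" and g: "g \<in> L2 L" and u: "continuous_on {0..L} u" and s: "s \<in> {0..L}"
  shows "(LINT x|lebesgue_on {0..s}. u x * (a * f x + b * g x))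
    = a * (LINT x|lebesgue_on {0..s}. u x * f x) + b * (LINT x|lebesgue_on {0..s}. u x * g x)"
proof -
  have "integrable (lebesgue_on {0..s}) (\<lambda>x. u x * f x)" "integrable (lebesgue_on {0..s}) (\<lambda>x. u x * g x)"
    using integrable_subinterval[OF integrable_continuous_mult_L2[OF f u]]
      integrable_subinterval[OF integrable_continuous_mult_L2[OF g u]] s by auto
  moreover have "(LINT x|lebesgue_on {0..s}. u x * (a * f x + b * g x))
      = (LINT x|lebesgue_on {0..s}. a * (u x * f x) + b * (u x * g x))"
    by (simp add: algebra_simps)
  ultimately show ?thesis by simp
qed

lemma integral_subinterval_cong_ae:
  assumes f: "f \<in> L2 L" and g: "g \<in> L2 L" and fg: "ae_eq L f g"
    and u: "continuous_on {0..L} u" and s: "s \<in> {0..L}"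
  shows "(LINT x|lebesgue_on {0..s}. u x * f x) = (LINT x|lebesgue_on {0..s}. u x * g x)"
proof (rule integral_cong_AE)
  show "AE x in lebesgue_on {0..s}. u x * f x = u x * g x"
    using fg s unfolding ae_eq_def AE_lebesgue_on_interval_iff by (auto elim!: eventually_mono)
  show "(\<lambda>x. u x * f x) \<in> borel_measurable (lebesgue_on {0..s})"
    "(\<lambda>x. u x * g x) \<in> borel_measurable (lebesgue_on {0..s})"
    using integrable_subinterval[OF integrable_continuous_mult_L2[OF f u]]
      integrable_subinterval[OF integrable_continuous_mult_L2[OF g u]] s
    by (auto intro: borel_measurable_integrable)
qed

lemma norm_integral_subinterval_le:
  assumes L: "L > 0" and f: "f \<in> L2 L" and u: "continuous_on {0..L} u"
    and B: "\<And>x. x \<in> {0..L} \<Longrightarrow> cmod (u x) \<le> B" and s: "s \<in> {0..L}"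
  shows "cmod (LINT x|lebesgue_on {0..s}. u x * f x) \<le> B * sqrt L * l2_norm L f"
proof -
  have "B \<ge> 0" using B[of 0] L by (auto intro: order.trans[OF norm_ge_zero])
  have "cmod (LINT x|lebesgue_on {0..s}. u x * f x) \<le> B * (LINT x|lebesgue_on {0..s}. cmod (f x))"
    using s B by (intro norm_integral_mult_le integrable_subinterval[OF L2_integrable[OF f]]
        continuous_on_subset[OF u]) auto
  also have "\<dots> \<le> B * (LINT x|lebesgue_on {0..L}. cmod (f x))"
    using s integrable_norm[OF L2_integrable[OF f]] \<open>B \<ge> 0\<close>
    by (intro mult_left_mono integral_mono_lebesgue_on_AE) auto
  also have "\<dots> \<le> B * (sqrt L * l2_norm L f)"
    using L1_le_L2[OF f L] \<open>B \<ge> 0\<close> by (rule mult_left_mono)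
  finally show ?thesis by (simp add: mult.assoc)
qed

lemma bounded_functional_L2_integral:
  assumes L: "L > 0" and u: "continuous_on {0..L} u"
  shows "bounded_functional_L2 L (\<lambda>f. LINT x|lebesgue_on {0..L}. u x * f x)"
proof -
  obtain B where "\<And>x. x \<in> {0..L} \<Longrightarrow> cmod (u x) \<le> B"
    using continuous_on_interval_bound[OF u] by blast
  then show ?thesis
    using L integral_subinterval_lincomb[OF _ _ u] integral_subinterval_cong_ae[OF _ _ _ u]
      norm_integral_subinterval_le[OF L _ u]
    by (intro bounded_functional_L2I[where K = "B * sqrt L"]) auto
qed

lemma bounded_functional_L2_volterra:
  assumes L: "L > 0" and G: "integrable (lebesgue_on {0..L}) G" and u: "continuous_on {0..L} u"
  shows "bounded_functional_L2 L
    (\<lambda>f. LINT s|lebesgue_on {0..L}. G s * (LINT x|lebesgue_on {0..s}. u x * f x))"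
proof -
  define V where "V f s = (LINT x|lebesgue_on {0..s}. u x * f x)" for f s
  obtain B where B: "\<And>x. x \<in> {0..L} \<Longrightarrow> cmod (u x) \<le> B"
    using continuous_on_interval_bound[OF u] by blast
  have int_GV: "integrable (lebesgue_on {0..L}) (\<lambda>s. G s * V f s)" if "f \<in> L2 L" for f
    using integrable_continuous_mult[OF G indefinite_integral_continuous_real[OF
        integrable_continuous_mult_L2[OF that u]]]
    by (simp add: V_def mult.commute)
  define A where "A = (LINT s|lebesgue_on {0..L}. cmod (G s))"
  show ?thesis
    unfolding V_def[symmetric]
  proof (rule bounded_functional_L2I[where K = "A * (B * sqrt L)"])
    fix f g a b assume f: "f \<in> L2 L" and g: "g \<in> L2 L"
    have "(LINT s|lebesgue_on {0..L}. G s * V (\<lambda>x. a * f x + b * g x) s)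
        = (LINT s|lebesgue_on {0..L}. a * (G s * V f s) + b * (G s * V g s))"
      using integral_subinterval_lincomb[OF f g u]
      by (intro Bochner_Integration.integral_cong) (auto simp: V_def algebra_simps)
    then show "(LINT s|lebesgue_on {0..L}. G s * V (\<lambda>x. a * f x + b * g x) s)
        = a * (LINT s|lebesgue_on {0..L}. G s * V f s) + b * (LINT s|lebesgue_on {0..L}. G s * V g s)"
      using int_GV[OF f] int_GV[OF g] by simp
  next
    fix f g assume "f \<in> L2 L" "g \<in> L2 L" "ae_eq L f g"
    then show "(LINT s|lebesgue_on {0..L}. G s * V f s) = (LINT s|lebesgue_on {0..L}. G s * V g s)"
      using integral_subinterval_cong_ae[OF _ _ _ u]
      by (intro Bochner_Integration.integral_cong) (auto simp: V_def)
  next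
    fix f assume f: "f \<in> L2 L"
    have "cmod (LINT s|lebesgue_on {0..L}. G s * V f s)
        \<le> (LINT s|lebesgue_on {0..L}. cmod (G s) * (B * sqrt L * l2_norm L f))"
      using integrable_norm[OF int_GV[OF f]] integrable_norm[OF G]
        norm_integral_subinterval_le[OF L f u B]
      by (intro order.trans[OF integral_norm_bound] integral_mono)
        (auto simp: V_def norm_mult intro!: mult_left_mono)
    then show "cmod (LINT s|lebesgue_on {0..L}. G s * V f s) \<le> A * (B * sqrt L) * l2_norm L f"
      by (simp add: A_def mult_ac)
  qed
qed

section \<open>The exponentials with exponents conjugate to the eigenvalues\<close>

lemma lam_eq_fourier_freq: "k \<noteq> 0 \<Longrightarrow> lam L g k = fourier_freq L k"
  by (simp add: lam_def fourier_freq_def)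

lemma lam0_eq_fourier_freq_imp_eq_0:
  assumes "\<forall>k::int. k \<noteq> 0 \<longrightarrow> lam L g 0 \<noteq> lam L g k" "lam L g 0 = fourier_freq L k"
  shows "k = 0"
  using assms lam_eq_fourier_freq by metis

lemma integral_exp_cnj_lam0_nonzero:
  assumes L: "L > 0" and hyp: "\<forall>k::int. k \<noteq> 0 \<longrightarrow> lam L g 0 \<noteq> lam L g k"
  shows "(LINT x|lebesgue_on {0..L}. exp (- cnj (lam L g 0) * of_real x)) \<noteq> 0"
proof (cases "cnj (lam L g 0) = 0")
  case True
  then show ?thesis using L by (simp add: measure_lebesgue_on_interval)
next
  case False
  have "exp (- cnj (lam L g 0) * of_real L) \<noteq> 1"
  proof
    assume "exp (- cnj (lam L g 0) * of_real L) = 1"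
    then obtain k where "- cnj (lam L g 0) = fourier_freq L k"
      using exp_eq_1_iff_fourier_freq[OF L] by blast
    then have "cnj (- cnj (lam L g 0)) = cnj (fourier_freq L k)" by simp
    then have "lam L g 0 = fourier_freq L k" by (simp add: cnj_fourier_freq)
    then show False
      using lam0_eq_fourier_freq_imp_eq_0[OF hyp] \<open>- cnj (lam L g 0) = fourier_freq L k\<close> False
      by (simp add: fourier_freq_def)
  qed
  then show ?thesis
    using integral_exp_interval[of L "- cnj (lam L g 0)"] L False by simp
qed

theorem riesz_basis_exp_cnj_lam:
  assumes L: "L > 0" and hyp: "\<forall>k::int. k \<noteq> 0 \<longrightarrow> lam L g 0 \<noteq> lam L g k"
  shows "riesz_basis L (\<lambda>k t. exp (- cnj (lam L g k) * of_real t))"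
proof -
  define u where "u t = exp (- cnj (lam L g 0) * of_real t)" for t
  define l :: "(real \<Rightarrow> complex) \<Rightarrow> complex"
    where "l f = (LINT x|lebesgue_on {0..L}. (1 / of_real (sqrt L)) * f x)" for f
  have sL: "complex_of_real (sqrt L) \<noteq> 0" using L by simp
  have l_int: "l f = (LINT x|lebesgue_on {0..L}. f x) / of_real (sqrt L)" for f
    unfolding l_def by simp
  have l_basis: "l (fourier_basis L k) = (if k = 0 then 1 else 0)" for k
    unfolding l_int fourier_basis_def using L integral_fourier_exp[OF L, of k]
    by (simp flip: of_real_mult)
  have u_int: "integrable (lebesgue_on {0..L}) u"
    unfolding u_def by (intro continuous_imp_integrable_real continuous_intros)
  show ?thesis
  proof (rule riesz_basis_rank_one_perturbation[where e = "fourier_basis L" and \<alpha> = "of_real (sqrt L)"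
        and v = "\<lambda>t. u t - 1" and l = l])
    show "orthonormal_basis L (fourier_basis L)" by (rule orthonormal_basis_fourier_basis[OF L])
    show "(\<lambda>t. u t - 1) \<in> L2 L" unfolding u_def by (intro L2_continuous continuous_intros)
    show "bounded_functional_L2 L l"
      unfolding l_def using L by (intro bounded_functional_L2_integral continuous_intros)
    have "complex_of_real (sqrt L) + l (\<lambda>t. u t - 1) = (LINT x|lebesgue_on {0..L}. u x) / of_real (sqrt L)"
      unfolding l_int using u_int L sL
      by (simp add: measure_lebesgue_on_interval scaleR_conv_of_real field_simps flip: of_real_mult)
    then show "complex_of_real (sqrt L) + l (\<lambda>t. u t - 1) \<noteq> 0"
      using integral_exp_cnj_lam0_nonzero[OF L hyp] sL by (simp add: u_def)
  next
    fix k
    have "of_real (sqrt L) * fourier_basis L k x + l (fourier_basis L k) * (u x - 1)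
        = exp (- cnj (lam L g k) * of_real x)" for x
    proof (cases "k = 0")
      case True
      then show ?thesis using sL by (simp add: fourier_basis_def l_basis u_def)
    next
      case False
      then show ?thesis using sL
        by (simp add: fourier_basis_def l_basis fourier_exp_def lam_eq_fourier_freq cnj_fourier_freq)
    qed
    then show "ae_eq L (\<lambda>x. of_real (sqrt L) * fourier_basis L k x + l (fourier_basis L k) * (u x - 1))
        (\<lambda>t. exp (- cnj (lam L g k) * of_real t))"
      by (simp add: ae_eq_def)
  qed (rule sL)
qed

section \<open>The eigenfunctions\<close>

lemma integral_x_exp:
  fixes \<mu> :: complex
  assumes T: "0 \<le> T" and \<mu>: "\<mu> \<noteq> 0"
  shows "(LINT x|lebesgue_on {0..T}. of_real x * exp (\<mu> * of_real x))
    = of_real T * exp (\<mu> * of_real T) / \<mu> - (exp (\<mu> * of_real T) - 1) / \<mu>\<^sup>2"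
proof -
  have "((\<lambda>x. of_real x * exp (\<mu> * of_real x) / \<mu> - exp (\<mu> * of_real x) / \<mu>\<^sup>2)
      has_vector_derivative (of_real t * exp (\<mu> * of_real t))) (at t within {0..T})" for t
  proof -
    have "((\<lambda>z. z * exp (\<mu> * z) / \<mu> - exp (\<mu> * z) / \<mu>\<^sup>2) has_field_derivative
        (of_real t * exp (\<mu> * of_real t))) (at (of_real t))"
      using \<mu> by (auto intro!: derivative_eq_intros simp: field_simps power2_eq_square)
    from has_complex_derivative_imp_has_vector_derivative[OF has_field_derivative_at_within[OF this]]
    show ?thesis by (simp add: o_def)
  qed
  from fundamental_theorem_of_calculus[OF T this]
  have "integral {0..T} (\<lambda>x. of_real x * exp (\<mu> * of_real x))
      = of_real T * exp (\<mu> * of_real T) / \<mu> - (exp (\<mu> * of_real T) - 1) / \<mu>\<^sup>2"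
    by (simp add: integral_unique diff_divide_distrib)
  moreover have "continuous_on {0..T} (\<lambda>x. of_real x * exp (\<mu> * of_real x))"
    by (intro continuous_intros)
  note lebesgue_integral_eq_integral[OF continuous_imp_integrable_real[OF this]]
  ultimately show ?thesis by simp
qed

lemma integral_weighted_exp:
  fixes \<mu> E :: complex
  assumes L: "L > 0" and \<mu>: "\<mu> \<noteq> 0" and E: "exp (\<mu> * of_real L) = E"
  shows "(LINT x|lebesgue_on {0..L}. (if E = 1 then of_real x / of_real L else 1 / (E - 1))
      * exp (\<mu> * of_real x)) = 1 / \<mu>"
proof (cases "E = 1")
  case True
  have "(LINT x|lebesgue_on {0..L}. of_real x / of_real L * exp (\<mu> * of_real x))
      = (LINT x|lebesgue_on {0..L}. of_real x * exp (\<mu> * of_real x)) / of_real L"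
    by simp
  then show ?thesis
    using True integral_x_exp[of L \<mu>] L \<mu> E by (simp add: field_simps)
next
  case False
  then show ?thesis
    using integral_exp_interval[of L \<mu>] L \<mu> E by simp
qed

lemma integral_volterra_exp:
  fixes \<mu> :: complex
  assumes G: "integrable (lebesgue_on {0..L}) G" and \<mu>: "\<mu> \<noteq> 0"
  shows "(LINT s|lebesgue_on {0..L}. G s * (LINT x|lebesgue_on {0..s}. exp (\<mu> * of_real x)))
    = ((LINT s|lebesgue_on {0..L}. G s * exp (\<mu> * of_real s)) - (LINT s|lebesgue_on {0..L}. G s)) / \<mu>"
proof -
  have "(LINT s|lebesgue_on {0..L}. G s * (LINT x|lebesgue_on {0..s}. exp (\<mu> * of_real x)))
      = (LINT s|lebesgue_on {0..L}. (G s * exp (\<mu> * of_real s) - G s) / \<mu>)"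
    using \<mu> by (intro Bochner_Integration.integral_cong) (auto simp: integral_exp_interval algebra_simps diff_divide_distrib)
  moreover have "integrable (lebesgue_on {0..L}) (\<lambda>s. G s * exp (\<mu> * of_real s))"
    using integrable_continuous_mult[OF G, of "\<lambda>s. exp (\<mu> * of_real s)"]
    by (simp add: mult.commute continuous_intros)
  ultimately show ?thesis
    using G by simp
qed

text \<open>
  The functional is f \<mapsto> \<integral> conj(g(s)) y_f(s) ds, where y_f(s) = -exp(-\<lambda>_0 s) (\<integral> w(x) exp(\<lambda>_0 x) f(x) dx
  + \<integral>_0^s exp(\<lambda>_0 x) f(x) dx) solves y' + \<lambda>_0 y = -f. The weight w fixes the constant of
  integration so that y_f = exp(-\<lambda>_k s) / (\<lambda>_k - \<lambda>_0) for f = exp(-\<lambda>_k x), k \<noteq> 0; a constant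
  weight fails when exp(\<lambda>_0 L) = 1, since then \<integral> exp(\<lambda>_0 x) exp(-\<lambda>_k x) dx = 0.
\<close>

lemma phi_coefficient_functional:
  assumes L: "L > 0" and g: "g \<in> L2 L" and hyp: "\<forall>k::int. k \<noteq> 0 \<longrightarrow> lam L g 0 \<noteq> lam L g k"
  obtains m where "bounded_functional_L2 L m"
    "\<And>k. k \<noteq> 0 \<Longrightarrow> m (\<lambda>x. exp (- lam L g k * of_real x))
      = 1 / (lam L g k - lam L g 0) * (LINT s|lebesgue_on {0..L}. cnj (g s) * exp (- lam L g k * of_real s))"
proof -
  define l0 where "l0 = lam L g 0"
  define E where "E = exp (l0 * of_real L)"
  define w where "w x = (if E = 1 then of_real x / of_real L else 1 / (E - 1)) * exp (l0 * of_real x)"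
    for x :: real
  define G where "G s = cnj (g s) * exp (- l0 * of_real s)" for s
  define I where "I h = (LINT s|lebesgue_on {0..L}. h s)" for h :: "real \<Rightarrow> complex"
  define m where "m f = - I G * (LINT x|lebesgue_on {0..L}. w x * f x)
      + (- 1) * (LINT s|lebesgue_on {0..L}. G s * (LINT x|lebesgue_on {0..s}. exp (l0 * of_real x) * f x))"
    for f
  have int_cnj_g: "integrable (lebesgue_on {0..L}) (\<lambda>s. cnj (g s) * exp (a * of_real s))" for a
  proof -
    have "(\<lambda>s. cnj (g s) * exp (a * of_real s)) = (\<lambda>s. exp (a * of_real s) * cnj (g s))"
      by (simp add: fun_eq_iff mult.commute)
    then show ?thesis
      using integrable_continuous_mult_L2[OF L2_cnj[OF g], of "\<lambda>s. exp (a * of_real s)"]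
      by (simp add: continuous_intros)
  qed
  have G: "integrable (lebesgue_on {0..L}) G"
    unfolding G_def by (rule int_cnj_g)
  have "continuous_on {0..L} w"
    unfolding w_def using L by (cases "E = 1") (auto intro!: continuous_intros)
  then have "bounded_functional_L2 L m"
    unfolding m_def
    by (intro bounded_functional_L2_lincomb bounded_functional_L2_integral bounded_functional_L2_volterra
        L G) (auto intro!: continuous_intros)
  moreover have "m (\<lambda>x. exp (- lam L g k * of_real x))
      = 1 / (lam L g k - l0) * I (\<lambda>s. cnj (g s) * exp (- lam L g k * of_real s))" if k: "k \<noteq> 0" for k
  proof -
    define \<mu> where "\<mu> = l0 - lam L g k"
    have \<mu>: "\<mu> \<noteq> 0" using hyp k by (simp add: \<mu>_def l0_def)
    have "exp (lam L g k * of_real L) = 1"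
      using k exp_fourier_freq_L_eq_1[OF L, of k] by (simp add: lam_eq_fourier_freq)
    then have E\<mu>: "exp (\<mu> * of_real L) = E"
      by (simp add: \<mu>_def E_def ring_distribs exp_diff)
    have pw: "exp (l0 * of_real x) * exp (- lam L g k * of_real x) = exp (\<mu> * of_real x)" for x
      by (simp add: \<mu>_def exp_add[symmetric] algebra_simps)
    have w_int: "(LINT x|lebesgue_on {0..L}. w x * exp (- lam L g k * of_real x)) = 1 / \<mu>"
      unfolding w_def mult.assoc pw by (rule integral_weighted_exp[OF L \<mu> E\<mu>])
    have "G s * exp (\<mu> * of_real s) = cnj (g s) * exp (- lam L g k * of_real s)" for s
      by (simp add: G_def \<mu>_def mult.assoc exp_add[symmetric] algebra_simps)
    then have volterra_term: "(LINT s|lebesgue_on {0..L}. G s * (LINT x|lebesgue_on {0..s}.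
        exp (l0 * of_real x) * exp (- lam L g k * of_real x)))
        = (I (\<lambda>s. cnj (g s) * exp (- lam L g k * of_real s)) - I G) / \<mu>"
      unfolding pw integral_volterra_exp[OF G \<mu>] by (simp add: I_def)
    have d: "lam L g k - l0 = - \<mu>" by (simp add: \<mu>_def)
    show ?thesis
      unfolding m_def w_int volterra_term d using \<mu> by (simp add: field_simps)
  qed
  ultimately show ?thesis
    using that by (simp add: I_def l0_def)
qed

lemma riesz_basis_fourier_exp_plus_functional:
  assumes L: "L > 0" and m: "bounded_functional_L2 L m"
    and \<phi>: "\<And>k. ae_eq L (\<lambda>x. fourier_exp L k x + (if k = 0 then 0 else m (fourier_exp L k))) (\<phi> k)"
  shows "riesz_basis L \<phi>"
proof -
  have sL: "complex_of_real (sqrt L) \<noteq> 0" using L by simp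
  text \<open>Subtracting a multiple of the mean makes the functional vanish on constants.\<close>
  define c where "c = of_real (sqrt L) * m (\<lambda>_. 1) / of_real L"
  define l where "l f = of_real (sqrt L) * m f + 1 * (LINT x|lebesgue_on {0..L}. - c * f x)" for f
  have l: "bounded_functional_L2 L l"
    unfolding l_def using L m by (intro bounded_functional_L2_lincomb bounded_functional_L2_integral) auto
  have l_basis: "l (fourier_basis L k) = (if k = 0 then 0 else m (fourier_exp L k))" for k
  proof -
    have "fourier_basis L k = (\<lambda>x. (1 / of_real (sqrt L)) * fourier_exp L k x)"
      by (simp add: fourier_basis_def fun_eq_iff)
    then have "l (fourier_basis L k) = (1 / of_real (sqrt L)) * l (fourier_exp L k)"
      by (simp only: bounded_functional_L2_scale[OF l fourier_exp_L2])
    moreover have "fourier_exp L 0 = (\<lambda>_. 1)" by (simp add: fun_eq_iff)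
    then have "l (fourier_exp L k) = of_real (sqrt L) * (if k = 0 then 0 else m (fourier_exp L k))"
      using L integral_fourier_exp[OF L, of k]
      by (simp add: l_def c_def measure_lebesgue_on_interval scaleR_conv_of_real)
    ultimately show ?thesis using sL by simp
  qed
  show ?thesis
  proof (rule riesz_basis_rank_one_perturbation[where e = "fourier_basis L" and \<alpha> = "of_real (sqrt L)"
        and v = "\<lambda>_. 1" and l = l])
    show "(\<lambda>_. 1) \<in> L2 L" by (intro L2_continuous continuous_intros)
    have "l (\<lambda>_. 1) = of_real (sqrt L) * l (fourier_basis L 0)"
      using bounded_functional_L2_scale[OF l fourier_basis_L2[of L 0], of "of_real (sqrt L)"] sL
      by (simp add: fourier_basis_def)
    then show "of_real (sqrt L) + l (\<lambda>_. 1) \<noteq> 0"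
      using l_basis[of 0] sL by simp
    show "ae_eq L (\<lambda>x. of_real (sqrt L) * fourier_basis L k x + l (fourier_basis L k) * 1) (\<phi> k)" for k
      using \<phi>[of k] sL by (simp add: l_basis fourier_basis_def)
  qed (use orthonormal_basis_fourier_basis[OF L] sL l in auto)
qed

theorem riesz_basis_phi:
  assumes L: "L > 0" and g: "g \<in> L2 L" and hyp: "\<forall>k::int. k \<noteq> 0 \<longrightarrow> lam L g 0 \<noteq> lam L g k"
  shows "riesz_basis L (phi L g)"
proof -
  obtain m where m: "bounded_functional_L2 L m"
    "\<And>k. k \<noteq> 0 \<Longrightarrow> m (\<lambda>x. exp (- lam L g k * of_real x))
      = 1 / (lam L g k - lam L g 0) * (LINT s|lebesgue_on {0..L}. cnj (g s) * exp (- lam L g k * of_real s))"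
    using phi_coefficient_functional[OF L g hyp] by blast
  have exp_lam: "exp (- lam L g k * of_real x) = fourier_exp L (- k) x" if "k \<noteq> 0" for k x
    using that by (simp add: fourier_exp_def lam_eq_fourier_freq fourier_freq_uminus)
  have "riesz_basis L (\<lambda>k. phi L g (- k))"
  proof (rule riesz_basis_fourier_exp_plus_functional[OF L m(1)])
    show "ae_eq L (\<lambda>x. fourier_exp L k x + (if k = 0 then 0 else m (fourier_exp L k))) (phi L g (- k))"
      for k
    proof (cases "k = 0")
      case False
      then have "m (fourier_exp L k) = 1 / (lam L g (- k) - lam L g 0)
          * (LINT s|lebesgue_on {0..L}. cnj (g s) * exp (- lam L g (- k) * of_real s))"
        using m(2)[of "- k"] exp_lam[of "- k"] by simp
      then show ?thesis
        using False exp_lam[of "- k"] by (simp add: ae_eq_def phi_def)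
    qed (simp add: ae_eq_def phi_def)
  qed
  from riesz_basis_reindex[OF this bij_uminus] show ?thesis
    by simp
qed

lemma INF_pos_if_finitely_many_small:
  fixes f :: "'a \<Rightarrow> real"
  assumes pos: "\<And>k. f k > 0" and fin: "finite {k. f k < \<delta>}" and \<delta>: "\<delta> > 0"
  shows "(INF k. f k) > 0"
proof -
  define c where "c = Min (insert \<delta> (f ` {k. f k < \<delta>}))"
  have "c > 0"
    using fin pos \<delta> by (auto simp: c_def)
  moreover have "c \<le> f k" for k
  proof (cases "f k < \<delta>")
    case True
    then show ?thesis using fin by (auto simp: c_def intro: Min_le)
  next
    case False
    then have "\<delta> \<le> f k" by simp
    then show ?thesis using fin by (auto simp: c_def intro: order.trans[OF Min_le])
  qed
  ultimately show ?thesis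
    by (metis UNIV_not_empty cINF_greatest order.strict_trans2)
qed

lemma phi_at_L:
  assumes "L > 0" "k \<noteq> 0"
  shows "phi L g k L = 1 + 1 / (lam L g k - lam L g 0)
    * (LINT x|lebesgue_on {0..L}. cnj (g x) * exp (- lam L g k * of_real x))"
  using assms exp_fourier_freq_L_eq_1[OF assms(1), of "- k"]
  by (simp add: phi_def lam_eq_fourier_freq fourier_freq_uminus)

lemma norm_phi_at_L_eventually_ge:
  assumes L: "L > 0"
  obtains N :: nat where "\<And>k. \<bar>k\<bar> > int N \<Longrightarrow> 1 / 2 \<le> cmod (phi L g k L)"
proof -
  define A where "A = (LINT x|lebesgue_on {0..L}. cmod (g x))"
  have A: "A \<ge> 0" unfolding A_def by (intro integral_nonneg_AE) auto
  obtain N :: nat where N: "(2 * A + cmod (lam L g 0) + 1) * L / (2 * pi) < real N"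
    using reals_Archimedean2 by blast
  have "1 / 2 \<le> cmod (phi L g k L)" if k: "\<bar>k\<bar> > int N" for k
  proof -
    define c where "c = 1 / (lam L g k - lam L g 0)
        * (LINT x|lebesgue_on {0..L}. cnj (g x) * exp (- lam L g k * of_real x))"
    have "k \<noteq> 0" using k by auto
    have "(2 * A + cmod (lam L g 0) + 1) * L / (2 * pi) < \<bar>real_of_int k\<bar>"
      using N k by linarith
    then have "2 * A + cmod (lam L g 0) + 1 < cmod (lam L g k)"
      using \<open>k \<noteq> 0\<close> L by (simp add: lam_eq_fourier_freq norm_fourier_freq field_simps)
    then have D: "2 * A + 1 \<le> cmod (lam L g k - lam L g 0)"
      using norm_triangle_ineq2[of "lam L g k" "lam L g 0"] by linarith
    have "cmod (LINT x|lebesgue_on {0..L}. cnj (g x) * exp (- lam L g k * of_real x))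
        \<le> (LINT x|lebesgue_on {0..L}. cmod (cnj (g x) * exp (- lam L g k * of_real x)))"
      by (rule integral_norm_bound)
    also have "\<dots> = A"
      unfolding A_def using \<open>k \<noteq> 0\<close>
      by (simp add: norm_mult norm_exp_eq_Re lam_eq_fourier_freq fourier_freq_def)
    finally have "cmod c \<le> A / cmod (lam L g k - lam L g 0)"
      by (simp add: c_def norm_divide divide_right_mono)
    also have "\<dots> \<le> A / (2 * A + 1)"
      using A D by (intro divide_left_mono mult_pos_pos) auto
    also have "\<dots> \<le> 1 / 2"
      using A by (simp add: field_simps)
    finally show ?thesis
      using phi_at_L[OF L \<open>k \<noteq> 0\<close>, of g] norm_triangle_ineq2[of 1 "- c"] by (simp add: c_def)
  qed
  then show ?thesis using that by blast
qed

theorem INF_norm_phi_at_L_pos: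
  assumes L: "L > 0"
    and hyp: "\<forall>k::int. k \<noteq> 0 \<longrightarrow>
           1 + 1 / (lam L g k - lam L g 0)
             * (LINT x|lebesgue_on {0..L}. cnj (g x) * exp (- lam L g k * of_real x)) \<noteq> 0"
  shows "(INF k::int. cmod (phi L g k L)) > 0"
proof (rule INF_pos_if_finitely_many_small[where \<delta> = "1 / 2"])
  show "cmod (phi L g k L) > 0" for k
    using hyp phi_at_L[OF L] by (cases "k = 0") (auto simp: phi_def)
  obtain N where N: "\<And>k. \<bar>k\<bar> > int N \<Longrightarrow> 1 / 2 \<le> cmod (phi L g k L)"
    using norm_phi_at_L_eventually_ge[OF L] by blast
  have "{k. cmod (phi L g k L) < 1 / 2} \<subseteq> {- int N..int N}"
  proof
    fix k assume "k \<in> {k. cmod (phi L g k L) < 1 / 2}"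
    then have "\<not> \<bar>k\<bar> > int N" using N by fastforce
    then show "k \<in> {- int N..int N}" by auto
  qed
  then show "finite {k. cmod (phi L g k L) < 1 / 2}"
    by (rule finite_subset) simp
qed simp

theorem proposition10:
  fixes L :: real and g :: "real \<Rightarrow> complex"
  assumes "L > 0"
    and "g \<in> L2 L"
    and "\<forall>k::int. k \<noteq> 0 \<longrightarrow> lam L g 0 \<noteq> lam L g k"
  shows "riesz_basis L (phi L g)
    \<and> ((\<forall>k::int. k \<noteq> 0 \<longrightarrow>
           1 + 1 / (lam L g k - lam L g 0)
             * (LINT x|lebesgue_on {0..L}. cnj (g x) * exp (- lam L g k * of_real x)) \<noteq> 0)
        \<longrightarrow> (INF k::int. cmod (phi L g k L)) > 0)
    \<and> riesz_basis L (\<lambda>k t. exp (- cnj (lam L g k) * of_real t))"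
  using riesz_basis_phi[OF assms] INF_norm_phi_at_L_pos[where g = g, OF assms(1)]
    riesz_basis_exp_cnj_lam[OF assms(1,3)]
  by blast

end
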